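(* Let $t,w,w',n,g$ be positive integers with $t\le w\le w'$. Suppose that there exists a $t$-resolvable Steiner system $\mathrm{S}(w,w',n)$. If there exists an $\mathrm{LGMHP}^*(t,w,w',g)$, then there exists an $\mathrm{LGMHP}^*(t,w,n,g)$.
   Context: A Steiner system $\mathrm{S}(s,k,n)$ is a pair $(X,\mathcal{B})$ with $|X|=n$ and $\mathcal{B}$ a family of $k$-subsets (blocks) of $X$ such that every $s$-subset of $X$ lies in exactly one block. An $\mathrm{S}(w,w',n)$ $(X,\mathcal{B})$ is $t$-resolvable if $\mathcal{B}$ can be partitioned into block sets of $\mathrm{S}(t,w',n)$'s on $X$. For a set $Y$ of size $m$, let $X=Y\times[g]$ with groups $\{y\}\times[g]$. An H-packing $\mathrm{HP}(m,g,w,t)$ is a family of $w$-subsets (blocks) of $X$, each meeting every group in at most one point, such that every $t$-subset of $X$ with points in $t$ distinct groups lies in at most one block. A block $\{(y_1,a_1),\dots,(y_w,a_w)\}$ is identified with the word indexed by $Y$ over $\{0\}\cup[g]$ with entry $a_s$ at coordinate $y_s$ and $0$ elsewhere. A $\mathrm{GMHP}^*(t,w,m,g)$ is an $\mathrm{HP}(m,g,w,t)$ in which any two distinct blocks have Hamming distance at least $2(w-t+1)$ and which has exactly $g^{t-1}\binom{m}{t}/\binom{w}{t}$ blocks. An $\mathrm{LGMHP}^*(t,w,m,g)$ is a partition of the set of all $w$-subsets of $Y\times[g]$ meeting each group in at most one point into block sets of $\mathrm{GMHP}^*(t,w,m,g)$'s. *)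

theory Defs
  imports Complex_Main "HOL-Library.Disjoint_Sets"
begin

definition steiner_system :: "nat \<Rightarrow> nat \<Rightarrow> 'a set \<Rightarrow> 'a set set \<Rightarrow> bool" where
  "steiner_system s k X B \<longleftrightarrow>
     (\<forall>b\<in>B. b \<subseteq> X \<and> card b = k) \<and>
     (\<forall>S. S \<subseteq> X \<and> card S = s \<longrightarrow> (\<exists>!b. b \<in> B \<and> S \<subseteq> b))"

definition t_resolvable :: "nat \<Rightarrow> nat \<Rightarrow> nat \<Rightarrow> 'a set \<Rightarrow> 'a set set \<Rightarrow> bool" where
  "t_resolvable t w w' X B \<longleftrightarrow>
     steiner_system w w' X B \<and>
     (\<exists>P. partition_on B P \<and> (\<forall>C\<in>P. steiner_system t w' X C))"

(* w-subsets of Y \<times> [g] meeting every group {y} \<times> [g] in at most one point *)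
definition transversal :: "'a set \<Rightarrow> nat \<Rightarrow> nat \<Rightarrow> ('a \<times> nat) set \<Rightarrow> bool" where
  "transversal Y g w b \<longleftrightarrow> b \<subseteq> Y \<times> {1..g} \<and> card b = w \<and> inj_on fst b"

definition hpacking :: "nat \<Rightarrow> nat \<Rightarrow> 'a set \<Rightarrow> nat \<Rightarrow> ('a \<times> nat) set set \<Rightarrow> bool" where
  "hpacking t w Y g Bs \<longleftrightarrow>
     (\<forall>b\<in>Bs. transversal Y g w b) \<and>
     (\<forall>T. T \<subseteq> Y \<times> {1..g} \<and> card T = t \<and> inj_on fst T \<longrightarrow>
          card {b\<in>Bs. T \<subseteq> b} \<le> 1)"

(* the word indexed by Y over {0} \<union> [g] associated with a block *)
definition word :: "('a \<times> nat) set \<Rightarrow> 'a \<Rightarrow> nat" where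
  "word b y = (if \<exists>a. (y, a) \<in> b then (THE a. (y, a) \<in> b) else 0)"

definition hdist :: "'a set \<Rightarrow> ('a \<times> nat) set \<Rightarrow> ('a \<times> nat) set \<Rightarrow> nat" where
  "hdist Y b c = card {y\<in>Y. word b y \<noteq> word c y}"

definition gmhp :: "nat \<Rightarrow> nat \<Rightarrow> 'a set \<Rightarrow> nat \<Rightarrow> ('a \<times> nat) set set \<Rightarrow> bool" where
  "gmhp t w Y g Bs \<longleftrightarrow>
     hpacking t w Y g Bs \<and>
     (\<forall>b\<in>Bs. \<forall>c\<in>Bs. b \<noteq> c \<longrightarrow> hdist Y b c \<ge> 2 * (w - t + 1)) \<and>
     real (card Bs) = real g ^ (t - 1) * real (card Y choose t) / real (w choose t)"

definition lgmhp :: "nat \<Rightarrow> nat \<Rightarrow> 'a set \<Rightarrow> nat \<Rightarrow> ('a \<times> nat) set set set \<Rightarrow> bool" where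
  "lgmhp t w Y g P \<longleftrightarrow>
     partition_on {b. transversal Y g w b} P \<and> (\<forall>Bs\<in>P. gmhp t w Y g Bs)"

end

theory Submission
  imports Defs
begin

text \<open>
  Identify the coordinate set of the given LGMHP* with every block B of the Steiner system by a
  bijection and relabel its words accordingly. For a parallel class C, itself an S(t,w',n), and a
  member Q_j of the LGMHP*, the union over B in C of the relabelled copies of Q_j is a
  GMHP*(t,w,n,g): words supported in distinct blocks of C share fewer than t coordinates, so they
  cover no common t-set and differ in at least 2(w-t+1) places, while words supported in the same
  block inherit both properties from Q_j; counting the blocks of C gives the size. Since every
  transversal w-set has its support in exactly one block of the S(w,w',n), these unions over all
  pairs (C, Q_j) partition the transversal w-sets.
\<close>

subsection \<open>Steiner systems\<close>

lemma steiner_system_blockD: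
  "steiner_system s k Y C \<Longrightarrow> B \<in> C \<Longrightarrow> B \<subseteq> Y \<and> card B = k"
  unfolding steiner_system_def by blast

lemma steiner_system_ex_block:
  assumes "steiner_system s k Y C" "S \<subseteq> Y" "card S = s"
  shows "\<exists>B\<in>C. S \<subseteq> B"
  using assms unfolding steiner_system_def by (metis ex1E)

lemma steiner_system_unique_block:
  assumes "steiner_system s k Y C" "B1 \<in> C" "B2 \<in> C" "S \<subseteq> B1" "S \<subseteq> B2" "card S = s"
  shows "B1 = B2"
proof -
  have "S \<subseteq> Y" using steiner_system_blockD[OF assms(1,2)] assms(4) by blast
  then have "\<exists>!B. B \<in> C \<and> S \<subseteq> B" using assms(1,6) unfolding steiner_system_def by simp
  then show ?thesis using assms(2-5) by (metis ex1E)
qed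

lemma steiner_system_card_Int_less:
  assumes "steiner_system t k Y C" "B1 \<in> C" "B2 \<in> C" "B1 \<noteq> B2"
  shows "card (B1 \<inter> B2) < t"
proof (rule ccontr)
  assume "\<not> card (B1 \<inter> B2) < t"
  then obtain S where "S \<subseteq> B1 \<inter> B2" "card S = t"
    using obtain_subset_with_card_n by (metis not_less)
  then show False using steiner_system_unique_block[OF assms(1-3), of S] assms(4) by blast
qed

lemma steiner_system_card_blocks:
  assumes "finite Y" and St: "steiner_system t k Y C"
  shows "card C * (k choose t) = card Y choose t"
proof -
  have C_Pow: "C \<subseteq> Pow Y" using steiner_system_blockD[OF St] by blast
  then have "finite C" using \<open>finite Y\<close> by (meson finite_Pow_iff finite_subset)
  have subsets_Y: "{S. S \<subseteq> Y \<and> card S = t} = (\<Union>B\<in>C. {S. S \<subseteq> B \<and> card S = t})"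
  proof (intro equalityI subsetI)
    fix S assume "S \<in> {S. S \<subseteq> Y \<and> card S = t}"
    then show "S \<in> (\<Union>B\<in>C. {S. S \<subseteq> B \<and> card S = t})"
      using steiner_system_ex_block[OF St] by auto
  next
    fix S assume "S \<in> (\<Union>B\<in>C. {S. S \<subseteq> B \<and> card S = t})"
    then show "S \<in> {S. S \<subseteq> Y \<and> card S = t}" using C_Pow by auto
  qed
  have "card (\<Union>B\<in>C. {S. S \<subseteq> B \<and> card S = t}) = (\<Sum>B\<in>C. card {S. S \<subseteq> B \<and> card S = t})"
  proof (rule card_UN_disjoint[OF \<open>finite C\<close>]; intro ballI impI)
    fix B assume "B \<in> C"
    then show "finite {S. S \<subseteq> B \<and> card S = t}"
      using C_Pow \<open>finite Y\<close> by (auto intro: finite_subset[of _ "Pow Y"])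
  next
    fix B1 B2 assume "B1 \<in> C" "B2 \<in> C" "B1 \<noteq> B2"
    then show "{S. S \<subseteq> B1 \<and> card S = t} \<inter> {S. S \<subseteq> B2 \<and> card S = t} = {}"
      using steiner_system_unique_block[OF St] by blast
  qed
  also have "\<dots> = (\<Sum>B\<in>C. k choose t)"
  proof (rule sum.cong[OF refl])
    fix B assume "B \<in> C"
    then have "finite B" "card B = k"
      using C_Pow \<open>finite Y\<close> steiner_system_blockD[OF St] by (auto intro: finite_subset)
    then show "card {S. S \<subseteq> B \<and> card S = t} = k choose t" using n_subsets by metis
  qed
  finally show ?thesis using subsets_Y n_subsets[OF \<open>finite Y\<close>, of t] by simp
qed

lemma steiner_system_bij_image:
  assumes St: "steiner_system s k X B" and h: "bij_betw h X Y"
  shows "steiner_system s k Y ((`) h ` B)"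
proof -
  have inj: "inj_on h X" and hX: "h ` X = Y" using h by (auto simp: bij_betw_def)
  have inv_image_block: "inv_into X h ` h ` b = b" if "b \<in> B" for b
    using steiner_system_blockD[OF St that] inj by (simp add: image_image subset_iff cong: image_cong)
  show ?thesis
    unfolding steiner_system_def
  proof (intro conjI ballI allI impI)
    fix b' assume "b' \<in> (`) h ` B"
    then obtain b where b: "b \<in> B" "b' = h ` b" by blast
    show "b' \<subseteq> Y" using steiner_system_blockD[OF St b(1)] b(2) hX by blast
    show "card b' = k"
      using steiner_system_blockD[OF St b(1)] b(2) card_image[OF inj_on_subset[OF inj]] by simp
  next
    fix S assume S: "S \<subseteq> Y \<and> card S = s"
    define S0 where "S0 = inv_into X h ` S"
    have "S0 \<subseteq> X" using S hX inv_into_into[of _ h X] unfolding S0_def by blast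
    have "h ` S0 = S"
      using S hX f_inv_into_f[of _ h X] unfolding S0_def by (simp add: image_image subset_iff cong: image_cong)
    have "card S0 = s"
      using S card_image[OF inj_on_inv_into[of S h X]] hX unfolding S0_def by simp
    then obtain b where b: "b \<in> B" "S0 \<subseteq> b"
      and unique: "\<And>b1. b1 \<in> B \<Longrightarrow> S0 \<subseteq> b1 \<Longrightarrow> b1 = b"
      using steiner_system_ex_block[OF St \<open>S0 \<subseteq> X\<close>] steiner_system_unique_block[OF St] by metis
    show "\<exists>!b'. b' \<in> (`) h ` B \<and> S \<subseteq> b'"
    proof (rule ex1I[of _ "h ` b"])
      show "h ` b \<in> (`) h ` B \<and> S \<subseteq> h ` b" using b \<open>h ` S0 = S\<close> by blast
    next
      fix b' assume "b' \<in> (`) h ` B \<and> S \<subseteq> b'"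
      then obtain b1 where b1: "b1 \<in> B" "b' = h ` b1" "S \<subseteq> h ` b1" by blast
      have "S0 \<subseteq> inv_into X h ` h ` b1" using b1(3) unfolding S0_def by (rule image_mono)
      then show "b' = h ` b" using unique[OF b1(1)] b1(2) inv_image_block[OF b1(1)] by simp
    qed
  qed
qed

lemma t_resolvable_bij_image:
  assumes "t_resolvable t w w' X B" and h: "bij_betw h X Y"
  shows "t_resolvable t w w' Y ((`) h ` B)"
proof -
  obtain R where St: "steiner_system w w' X B" and R: "partition_on B R"
    and classes: "\<forall>C\<in>R. steiner_system t w' X C"
    using assms(1) unfolding t_resolvable_def by blast
  have "\<Union>B \<subseteq> X" using steiner_system_blockD[OF St] by blast
  then have "inj_on ((`) h) B" using h by (intro inj_on_image) (auto simp: bij_betw_def intro: inj_on_subset)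
  then have "partition_on ((`) h ` B) ((`) ((`) h) ` R - {{}})"
    by (rule partition_on_inj_image[OF R])
  moreover have "{} \<notin> (`) ((`) h) ` R" using R by (auto simp: partition_on_def)
  ultimately have "partition_on ((`) h ` B) ((`) ((`) h) ` R)" by simp
  moreover have "\<forall>C\<in>(`) ((`) h) ` R. steiner_system t w' Y C"
    using classes steiner_system_bij_image[OF _ h] by blast
  ultimately show ?thesis
    unfolding t_resolvable_def using steiner_system_bij_image[OF St h] by blast
qed

subsection \<open>Words and relabelled blocks\<close>

lemma word_eq:
  assumes "inj_on fst b" "(y, a) \<in> b"
  shows "word b y = a"
proof -
  have "a' = a" if "(y, a') \<in> b" for a'
    using inj_onD[OF assms(1) _ that assms(2)] by simp
  then have "(THE a. (y, a) \<in> b) = a" using assms(2) by (rule the_equality[rotated])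
  then show ?thesis unfolding word_def using assms(2) by auto
qed

lemma word_eq_0: "y \<notin> fst ` b \<Longrightarrow> word b y = 0"
  unfolding word_def by force

lemma word_neq_0:
  assumes "transversal Y g w b" "y \<in> fst ` b"
  shows "word b y \<noteq> 0"
proof -
  obtain a where "(y, a) \<in> b" using assms(2) by force
  moreover have "b \<subseteq> Y \<times> {1..g}" "inj_on fst b" using assms(1) by (auto simp: transversal_def)
  ultimately show ?thesis using word_eq by fastforce
qed

lemma transversal_support:
  "transversal Y g w b \<Longrightarrow> fst ` b \<subseteq> Y \<and> card (fst ` b) = w"
  unfolding transversal_def by (auto simp: card_image)

lemma finite_transversals: "finite Y \<Longrightarrow> finite {b. transversal Y g w b}"
  by (rule finite_subset[of _ "Pow (Y \<times> {1..g})"]) (auto simp: transversal_def)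

definition relabel :: "('b \<Rightarrow> 'a) \<Rightarrow> ('b \<times> nat) set \<Rightarrow> ('a \<times> nat) set" where
  "relabel f q = map_prod f id ` q"

lemma fst_relabel [simp]: "fst ` relabel f q = f ` fst ` q"
  unfolding relabel_def by force

lemma relabel_mono: "S \<subseteq> q \<Longrightarrow> relabel f S \<subseteq> relabel f q"
  unfolding relabel_def by (rule image_mono)

lemma relabel_relabel: "relabel f (relabel h q) = relabel (f \<circ> h) q"
  unfolding relabel_def image_comp map_prod.comp by simp

lemma relabel_id_on: "(\<And>y. y \<in> fst ` q \<Longrightarrow> f y = y) \<Longrightarrow> relabel f q = q"
  unfolding relabel_def by (force simp: map_prod_def split_beta)

lemma relabel_inv_into:
  "inj_on f A \<Longrightarrow> fst ` q \<subseteq> A \<Longrightarrow> relabel (inv_into A f) (relabel f q) = q"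
  unfolding relabel_relabel by (rule relabel_id_on) auto

lemma relabel_relabel_inv_into:
  "fst ` b \<subseteq> f ` A \<Longrightarrow> relabel f (relabel (inv_into A f) b) = b"
  unfolding relabel_relabel by (rule relabel_id_on) (auto simp: f_inv_into_f)

lemma card_relabel: "inj_on f A \<Longrightarrow> fst ` q \<subseteq> A \<Longrightarrow> card (relabel f q) = card q"
  unfolding relabel_def
  by (rule card_image, rule inj_on_subset[OF map_prod_inj_on[OF _ inj_on_id[of UNIV]]]) auto

lemma inj_on_fst_relabel:
  assumes "inj_on f A" "fst ` q \<subseteq> A" "inj_on fst q"
  shows "inj_on fst (relabel f q)"
proof -
  have "inj_on (f \<circ> fst) q" using assms by (blast intro: comp_inj_on inj_on_subset)
  then have "inj_on (fst \<circ> map_prod f id) q" by (simp add: comp_def)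
  then show ?thesis unfolding relabel_def by (rule inj_on_imageI)
qed

lemma transversal_relabel:
  assumes "transversal A g w q" "inj_on f A" "f ` A \<subseteq> Y"
  shows "transversal Y g w (relabel f q)"
proof -
  have "fst ` q \<subseteq> A" using assms(1) by (auto simp: transversal_def)
  then show ?thesis
    using assms card_relabel inj_on_fst_relabel
    unfolding transversal_def relabel_def by (fastforce simp: card_relabel)
qed

lemma transversal_relabel_inv_into:
  assumes "transversal Y g w b" "inj_on f A" "fst ` b \<subseteq> f ` A"
  shows "transversal A g w (relabel (inv_into A f) b)"
proof (rule transversal_relabel)
  show "transversal (f ` A) g w b"
    using assms(1,3) unfolding transversal_def by (auto simp: subset_iff)
  show "inj_on (inv_into A f) (f ` A)" by (rule inj_on_inv_into) (rule subset_refl)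
  show "inv_into A f ` f ` A \<subseteq> A" by (auto intro: inv_into_into)
qed

lemma word_relabel:
  assumes "inj_on f A" "fst ` q \<subseteq> A" "inj_on fst q" "y \<in> A"
  shows "word (relabel f q) (f y) = word q y"
proof (cases "y \<in> fst ` q")
  case True
  then obtain a where "(y, a) \<in> q" by force
  moreover have "(f y, a) \<in> relabel f q" using calculation unfolding relabel_def by force
  ultimately show ?thesis using word_eq inj_on_fst_relabel[OF assms(1-3)] assms(3) by metis
next
  case False
  then have "f y \<notin> fst ` relabel f q"
    using inj_on_image_mem_iff[OF assms(1) assms(4) assms(2)] by simp
  then show ?thesis using False word_eq_0 by metis
qed

lemma hdist_relabel:
  assumes f: "inj_on f A" "f ` A \<subseteq> Y"
    and q1: "transversal A g w q1" and q2: "transversal A g w' q2"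
  shows "hdist Y (relabel f q1) (relabel f q2) = hdist A q1 q2"
proof -
  have supp: "fst ` q1 \<subseteq> A" "inj_on fst q1" "fst ` q2 \<subseteq> A" "inj_on fst q2"
    using q1 q2 by (auto simp: transversal_def)
  have words: "word (relabel f q1) (f x) \<noteq> word (relabel f q2) (f x) \<longleftrightarrow> word q1 x \<noteq> word q2 x"
    if "x \<in> A" for x
    using word_relabel[OF f(1) supp(1,2) that] word_relabel[OF f(1) supp(3,4) that] by simp
  have "fst ` relabel f q1 \<subseteq> f ` A" "fst ` relabel f q2 \<subseteq> f ` A"
    using supp by (simp_all add: image_mono)
  then have outside: "word (relabel f q1) y = 0 \<and> word (relabel f q2) y = 0" if "y \<notin> f ` A" for y
    using that word_eq_0[of y] by (meson subsetD)
  have "{y\<in>Y. word (relabel f q1) y \<noteq> word (relabel f q2) y} = f ` {x\<in>A. word q1 x \<noteq> word q2 x}"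
  proof (intro equalityI subsetI)
    fix y assume y: "y \<in> {y\<in>Y. word (relabel f q1) y \<noteq> word (relabel f q2) y}"
    have "y \<in> f ` A"
    proof (rule ccontr)
      assume "y \<notin> f ` A"
      then show False using outside[of y] y by simp
    qed
    then obtain x where x: "x \<in> A" "y = f x" by blast
    then have "word q1 x \<noteq> word q2 x" using y words[OF x(1)] by simp
    then show "y \<in> f ` {x\<in>A. word q1 x \<noteq> word q2 x}" using x by blast
  next
    fix y assume "y \<in> f ` {x\<in>A. word q1 x \<noteq> word q2 x}"
    then obtain x where x: "x \<in> A" "word q1 x \<noteq> word q2 x" "y = f x" by blast
    then show "y \<in> {y\<in>Y. word (relabel f q1) y \<noteq> word (relabel f q2) y}"
      using words[OF x(1)] f(2) by auto
  qed
  moreover have "inj_on f {x\<in>A. word q1 x \<noteq> word q2 x}" by (rule inj_on_subset[OF f(1)]) blast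
  ultimately show ?thesis unfolding hdist_def by (simp add: card_image)
qed

lemma hdist_ge_card_Diff:
  assumes "finite Y" and b1: "transversal Y g w b1" and b2: "transversal Y g w' b2"
  shows "card (fst ` b1 - fst ` b2) + card (fst ` b2 - fst ` b1) \<le> hdist Y b1 b2"
proof -
  have "finite (fst ` b1)" "finite (fst ` b2)"
    using \<open>finite Y\<close> transversal_support[OF b1] transversal_support[OF b2] finite_subset by blast+
  then have "card (fst ` b1 - fst ` b2) + card (fst ` b2 - fst ` b1)
      = card ((fst ` b1 - fst ` b2) \<union> (fst ` b2 - fst ` b1))"
    by (intro card_Un_disjoint[symmetric]) auto
  also have "\<dots> \<le> hdist Y b1 b2"
    unfolding hdist_def
  proof (rule card_mono)
    show "finite {y \<in> Y. word b1 y \<noteq> word b2 y}" using \<open>finite Y\<close> by simp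
  next
    show "fst ` b1 - fst ` b2 \<union> (fst ` b2 - fst ` b1) \<subseteq> {y \<in> Y. word b1 y \<noteq> word b2 y}"
    proof
      fix y assume y: "y \<in> fst ` b1 - fst ` b2 \<union> (fst ` b2 - fst ` b1)"
      then have "y \<in> Y" using transversal_support[OF b1] transversal_support[OF b2] by blast
      moreover have "word b1 y \<noteq> word b2 y"
        using y word_neq_0[OF b1, of y] word_neq_0[OF b2, of y] word_eq_0[of y b1] word_eq_0[of y b2]
        by (metis DiffE UnE)
      ultimately show "y \<in> {y \<in> Y. word b1 y \<noteq> word b2 y}" by simp
    qed
  qed
  finally show ?thesis .
qed

lemma hpackingI:
  assumes "\<And>b. b \<in> Bs \<Longrightarrow> transversal Y g w b"
    and "\<And>T b1 b2. transversal Y g t T \<Longrightarrow> b1 \<in> Bs \<Longrightarrow> b2 \<in> Bs \<Longrightarrow> T \<subseteq> b1 \<Longrightarrow> T \<subseteq> b2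
      \<Longrightarrow> b1 = b2"
  shows "hpacking t w Y g Bs"
  unfolding hpacking_def
proof (intro conjI ballI allI impI)
  fix T assume "T \<subseteq> Y \<times> {1..g} \<and> card T = t \<and> inj_on fst T"
  then have "transversal Y g t T" by (simp add: transversal_def)
  then have "\<forall>b1\<in>{b \<in> Bs. T \<subseteq> b}. \<forall>b2\<in>{b \<in> Bs. T \<subseteq> b}. b1 = b2" using assms(2) by blast
  then show "card {b \<in> Bs. T \<subseteq> b} \<le> 1"
    using card_le_Suc0_iff_eq[of "{b \<in> Bs. T \<subseteq> b}"] by (cases "finite {b \<in> Bs. T \<subseteq> b}") auto
qed (use assms(1) in blast)

lemma hpacking_unique_block:
  assumes "hpacking t w Y g Bs" "finite Y" "transversal Y g t T"
    and "b1 \<in> Bs" "b2 \<in> Bs" "T \<subseteq> b1" "T \<subseteq> b2"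
  shows "b1 = b2"
proof -
  have "Bs \<subseteq> {b. transversal Y g w b}" using assms(1) by (auto simp: hpacking_def)
  then have "finite {b \<in> Bs. T \<subseteq> b}"
    using finite_transversals[OF assms(2)] by (auto intro: finite_subset)
  moreover have "card {b \<in> Bs. T \<subseteq> b} \<le> 1"
    using assms(1,3) unfolding hpacking_def transversal_def by blast
  ultimately show ?thesis
    using assms(4-7) card_le_Suc0_iff_eq[of "{b \<in> Bs. T \<subseteq> b}"] by auto
qed

lemma hpacking_relabel:
  assumes "finite A" "hpacking t w A g Q" and f: "inj_on f A" "f ` A \<subseteq> Y"
  shows "hpacking t w Y g (relabel f ` Q)"
proof (rule hpackingI)
  have Q: "transversal A g w q" if "q \<in> Q" for q using assms(2) that by (simp add: hpacking_def)
  show "transversal Y g w b" if "b \<in> relabel f ` Q" for b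
    using that Q transversal_relabel[OF _ f] by blast
  fix T b1 b2
  assume T: "transversal Y g t T" and "b1 \<in> relabel f ` Q" "b2 \<in> relabel f ` Q"
    and "T \<subseteq> b1" "T \<subseteq> b2"
  then obtain q1 q2 where q: "q1 \<in> Q" "q2 \<in> Q" "b1 = relabel f q1" "b2 = relabel f q2"
    and T_sub: "T \<subseteq> relabel f q1" "T \<subseteq> relabel f q2" by blast
  have supp: "fst ` q1 \<subseteq> A" "fst ` q2 \<subseteq> A" using Q[OF q(1)] Q[OF q(2)] by (auto simp: transversal_def)
  have "fst ` T \<subseteq> f ` A" using image_mono[OF T_sub(1), of fst] supp(1) by auto
  then have T': "transversal A g t (relabel (inv_into A f) T)"
    by (rule transversal_relabel_inv_into[OF T f(1)])
  have "relabel (inv_into A f) T \<subseteq> q1" "relabel (inv_into A f) T \<subseteq> q2"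
    using relabel_mono[OF T_sub(1)] relabel_mono[OF T_sub(2)] relabel_inv_into[OF f(1)] supp by metis+
  then show "b1 = b2" using hpacking_unique_block[OF assms(2,1) T' q(1,2)] q(3,4) by simp
qed

subsection \<open>Lifting along a resolvable Steiner system\<close>

locale resolvable_lifting =
  fixes t w w' g :: nat and Y :: "'a set" and Bs :: "'a set set" and R :: "'a set set set"
    and A :: "'b set" and Q :: "('b \<times> nat) set set set" and phi :: "'a set \<Rightarrow> 'b \<Rightarrow> 'a"
  assumes finite_Y: "finite Y" and t_le_w: "t \<le> w"
    and steiner: "steiner_system w w' Y Bs"
    and resolution: "partition_on Bs R"
    and classes: "\<And>C. C \<in> R \<Longrightarrow> steiner_system t w' Y C"
    and lgmhp_Q: "lgmhp t w A g Q" and finite_A: "finite A" and card_A: "card A = w'"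
    and phi: "\<And>B. B \<in> Bs \<Longrightarrow> bij_betw (phi B) A B"
begin

definition lifted_class :: "'a set set \<Rightarrow> ('b \<times> nat) set set \<Rightarrow> ('a \<times> nat) set set" where
  "lifted_class C Qj = (\<Union>B\<in>C. relabel (phi B) ` Qj)"

lemma phi_inj: "B \<in> Bs \<Longrightarrow> inj_on (phi B) A"
  and phi_image: "B \<in> Bs \<Longrightarrow> phi B ` A = B"
  using phi by (auto simp: bij_betw_def)

lemma phi_image_subset: "B \<in> Bs \<Longrightarrow> phi B ` A \<subseteq> Y"
  using phi_image steiner_system_blockD[OF steiner] by blast

lemma class_subset: "C \<in> R \<Longrightarrow> C \<subseteq> Bs"
  using resolution by (auto simp: partition_on_def)

lemma gmhp_Q: "Qj \<in> Q \<Longrightarrow> gmhp t w A g Qj"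
  using lgmhp_Q by (simp add: lgmhp_def)

lemma transversal_Q: "Qj \<in> Q \<Longrightarrow> q \<in> Qj \<Longrightarrow> transversal A g w q"
  using lgmhp_Q by (auto simp: lgmhp_def partition_on_def)

lemma transversal_lifted:
  assumes "B \<in> Bs" "transversal A g w q"
  shows "transversal Y g w (relabel (phi B) q)" "fst ` relabel (phi B) q \<subseteq> B"
proof -
  show "transversal Y g w (relabel (phi B) q)"
    by (rule transversal_relabel[OF assms(2) phi_inj[OF assms(1)] phi_image_subset[OF assms(1)]])
  have "fst ` q \<subseteq> A" using assms(2) by (auto simp: transversal_def)
  then show "fst ` relabel (phi B) q \<subseteq> B" using phi_image[OF assms(1)] by auto
qed

lemma lifted_eqD:
  assumes "B1 \<in> Bs" "B2 \<in> Bs" "transversal A g w q1" "transversal A g w q2"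
    and eq: "relabel (phi B1) q1 = relabel (phi B2) q2"
  shows "B1 = B2 \<and> q1 = q2"
proof
  let ?b = "relabel (phi B1) q1"
  have "card (fst ` ?b) = w"
    using transversal_support[OF transversal_lifted(1)[OF assms(1,3)]] by simp
  then show "B1 = B2"
    using steiner_system_unique_block[OF steiner assms(1,2)]
      transversal_lifted(2)[OF assms(1,3)] transversal_lifted(2)[OF assms(2,4)] eq by metis
  moreover have "fst ` q1 \<subseteq> A" "fst ` q2 \<subseteq> A" using assms(3,4) by (auto simp: transversal_def)
  ultimately show "q1 = q2" using relabel_inv_into[OF phi_inj[OF assms(1)]] eq by metis
qed

lemma lifted_class_subset:
  "C \<in> R \<Longrightarrow> Qj \<in> Q \<Longrightarrow> lifted_class C Qj \<subseteq> {b. transversal Y g w b}"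
  unfolding lifted_class_def using class_subset transversal_Q transversal_lifted(1) by blast

lemma transversal_in_lifted_class:
  assumes b: "transversal Y g w b"
  shows "\<exists>C\<in>R. \<exists>Qj\<in>Q. b \<in> lifted_class C Qj"
proof -
  obtain B where B: "B \<in> Bs" "fst ` b \<subseteq> B"
    using steiner_system_ex_block[OF steiner] transversal_support[OF b] by blast
  obtain C where C: "C \<in> R" "B \<in> C" using resolution B(1) by (auto simp: partition_on_def)
  let ?q = "relabel (inv_into A (phi B)) b"
  have "transversal A g w ?q"
    using transversal_relabel_inv_into[OF b phi_inj[OF B(1)]] B(2) phi_image[OF B(1)] by simp
  then obtain Qj where Qj: "Qj \<in> Q" "?q \<in> Qj" using lgmhp_Q by (auto simp: lgmhp_def partition_on_def)
  have "b = relabel (phi B) ?q"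
    using relabel_relabel_inv_into[of b "phi B" A] B(2) phi_image[OF B(1)] by simp
  then show ?thesis using C Qj unfolding lifted_class_def by blast
qed

lemma lifted_class_eqD:
  assumes "C1 \<in> R" "Q1 \<in> Q" "C2 \<in> R" "Q2 \<in> Q" "b \<in> lifted_class C1 Q1" "b \<in> lifted_class C2 Q2"
  shows "C1 = C2 \<and> Q1 = Q2"
proof -
  obtain B1 q1 where 1: "B1 \<in> C1" "q1 \<in> Q1" "b = relabel (phi B1) q1"
    using assms(5) unfolding lifted_class_def by blast
  obtain B2 q2 where 2: "B2 \<in> C2" "q2 \<in> Q2" "b = relabel (phi B2) q2"
    using assms(6) unfolding lifted_class_def by blast
  have "B1 = B2 \<and> q1 = q2"
    using lifted_eqD class_subset assms(1-4) 1 2 transversal_Q by (metis subsetD)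
  moreover have "disjoint R" "disjoint Q"
    using resolution lgmhp_Q by (auto simp: partition_on_def lgmhp_def)
  ultimately show ?thesis using 1 2 assms(1-4) by (metis disjointD disjoint_iff)
qed

lemma partition_lifted_classes:
  "partition_on {b. transversal Y g w b} (case_prod lifted_class ` (R \<times> Q))"
proof (rule partition_onI)
  show "\<Union>(case_prod lifted_class ` (R \<times> Q)) = {b. transversal Y g w b}"
    using lifted_class_subset transversal_in_lifted_class by fast
next
  fix p p' assume "p \<in> case_prod lifted_class ` (R \<times> Q)" "p' \<in> case_prod lifted_class ` (R \<times> Q)"
    and "p \<noteq> p'"
  then show "disjnt p p'" unfolding disjnt_def using lifted_class_eqD by fast
next
  show "{} \<notin> case_prod lifted_class ` (R \<times> Q)"
  proof
    assume "{} \<in> case_prod lifted_class ` (R \<times> Q)"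
    then obtain C Qj where C: "C \<in> R" "Qj \<in> Q" "lifted_class C Qj = {}" by auto
    have "C \<noteq> {}" using resolution C(1) by (auto simp: partition_on_def)
    then obtain B where "B \<in> C" by blast
    moreover have "Qj \<noteq> {}" using lgmhp_Q C(2) by (auto simp: lgmhp_def partition_on_def)
    then obtain q where "q \<in> Qj" by blast
    ultimately show False using C(3) unfolding lifted_class_def by blast
  qed
qed

lemma lifted_class_memE:
  assumes "C \<in> R" "Qj \<in> Q" "b \<in> lifted_class C Qj"
  obtains B q where "B \<in> C" "B \<in> Bs" "q \<in> Qj" "transversal A g w q" "b = relabel (phi B) q"
  using assms class_subset transversal_Q unfolding lifted_class_def by blast

lemma hpacking_lifted_class:
  assumes C: "C \<in> R" and Qj: "Qj \<in> Q"
  shows "hpacking t w Y g (lifted_class C Qj)"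
proof (rule hpackingI)
  show "transversal Y g w b" if "b \<in> lifted_class C Qj" for b
    using lifted_class_subset[OF C Qj] that by blast
  fix T b1 b2 assume T: "transversal Y g t T"
    and b: "b1 \<in> lifted_class C Qj" "b2 \<in> lifted_class C Qj" "T \<subseteq> b1" "T \<subseteq> b2"
  obtain B1 q1 where 1: "B1 \<in> C" "B1 \<in> Bs" "q1 \<in> Qj" "transversal A g w q1" "b1 = relabel (phi B1) q1"
    using lifted_class_memE[OF C Qj b(1)] .
  obtain B2 q2 where 2: "B2 \<in> C" "B2 \<in> Bs" "q2 \<in> Qj" "transversal A g w q2" "b2 = relabel (phi B2) q2"
    using lifted_class_memE[OF C Qj b(2)] .
  have "fst ` T \<subseteq> B1" "fst ` T \<subseteq> B2"
    using image_mono[OF b(3), of fst] image_mono[OF b(4), of fst]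
      transversal_lifted(2)[OF 1(2,4)] transversal_lifted(2)[OF 2(2,4)] 1(5) 2(5) by auto
  then have "B1 = B2"
    using steiner_system_unique_block[OF classes[OF C] 1(1) 2(1)] transversal_support[OF T] by blast
  moreover have "hpacking t w Y g (relabel (phi B1) ` Qj)"
    using hpacking_relabel[OF finite_A _ phi_inj[OF 1(2)] phi_image_subset[OF 1(2)]] gmhp_Q[OF Qj]
    by (simp add: gmhp_def)
  ultimately show "b1 = b2"
    using hpacking_unique_block[OF _ finite_Y T _ _ b(3,4)] 1(3,5) 2(3,5) by blast
qed

lemma hdist_lifted_class:
  assumes C: "C \<in> R" and Qj: "Qj \<in> Q"
    and b: "b1 \<in> lifted_class C Qj" "b2 \<in> lifted_class C Qj" "b1 \<noteq> b2"
  shows "2 * (w - t + 1) \<le> hdist Y b1 b2"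
proof -
  obtain B1 q1 where 1: "B1 \<in> C" "B1 \<in> Bs" "q1 \<in> Qj" "transversal A g w q1" "b1 = relabel (phi B1) q1"
    using lifted_class_memE[OF C Qj b(1)] .
  obtain B2 q2 where 2: "B2 \<in> C" "B2 \<in> Bs" "q2 \<in> Qj" "transversal A g w q2" "b2 = relabel (phi B2) q2"
    using lifted_class_memE[OF C Qj b(2)] .
  show ?thesis
  proof (cases "B1 = B2")
    case True
    then have "q1 \<noteq> q2" using b(3) 1(5) 2(5) by auto
    then have "2 * (w - t + 1) \<le> hdist A q1 q2" using gmhp_Q[OF Qj] 1(3) 2(3) by (simp add: gmhp_def)
    also have "\<dots> = hdist Y b1 b2"
      using hdist_relabel[OF phi_inj[OF 1(2)] phi_image_subset[OF 1(2)] 1(4) 2(4)] 1(5) 2(5) True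
      by simp
    finally show ?thesis .
  next
    case False
    let ?S1 = "fst ` b1" and ?S2 = "fst ` b2"
    have b1: "transversal Y g w b1" and b2: "transversal Y g w b2"
      using lifted_class_subset[OF C Qj] b by auto
    have "?S1 \<inter> ?S2 \<subseteq> B1 \<inter> B2"
      using transversal_lifted(2)[OF 1(2,4)] transversal_lifted(2)[OF 2(2,4)] 1(5) 2(5) by blast
    moreover have "finite (B1 \<inter> B2)"
      using steiner_system_blockD[OF steiner 1(2)] finite_Y by (blast intro: finite_subset)
    ultimately have "card (?S1 \<inter> ?S2) < t"
      using steiner_system_card_Int_less[OF classes[OF C] 1(1) 2(1) False] card_mono
      by (metis le_less_trans)
    moreover have "finite (?S1 \<inter> ?S2)" using \<open>finite (B1 \<inter> B2)\<close> \<open>?S1 \<inter> ?S2 \<subseteq> B1 \<inter> B2\<close>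
      by (rule finite_subset[rotated])
    ultimately have "2 * (w - t + 1) \<le> card (?S1 - ?S2) + card (?S2 - ?S1)"
      using card_Diff_subset_Int[of ?S1 ?S2] card_Diff_subset_Int[of ?S2 ?S1] t_le_w
        transversal_support[OF b1] transversal_support[OF b2]
      by (simp add: Int_commute)
    also have "\<dots> \<le> hdist Y b1 b2" by (rule hdist_ge_card_Diff[OF finite_Y b1 b2])
    finally show ?thesis .
  qed
qed

lemma card_lifted_class:
  assumes C: "C \<in> R" and Qj: "Qj \<in> Q"
  shows "card (lifted_class C Qj) = card C * card Qj"
proof -
  have "Bs \<subseteq> Pow Y" using steiner_system_blockD[OF steiner] by blast
  then have "finite C" using finite_Y class_subset[OF C] by (meson finite_Pow_iff finite_subset)
  have "Qj \<subseteq> {q. transversal A g w q}" using transversal_Q[OF Qj] by blast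
  then have "finite Qj" using finite_transversals[OF finite_A] by (rule finite_subset)
  have lifted_eq: "B1 = B2 \<and> q1 = q2"
    if "B1 \<in> C" "B2 \<in> C" "q1 \<in> Qj" "q2 \<in> Qj" "relabel (phi B1) q1 = relabel (phi B2) q2"
    for B1 B2 q1 q2
    using class_subset[OF C] that(1,2)
      lifted_eqD[OF _ _ transversal_Q[OF Qj that(3)] transversal_Q[OF Qj that(4)] that(5)]
    by (meson subsetD)
  have "card (lifted_class C Qj) = (\<Sum>B\<in>C. card (relabel (phi B) ` Qj))"
    unfolding lifted_class_def
  proof (rule card_UN_disjoint[OF \<open>finite C\<close>]; intro ballI impI)
    fix B assume "B \<in> C"
    show "finite (relabel (phi B) ` Qj)" using \<open>finite Qj\<close> by (rule finite_imageI)
  next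
    fix B1 B2 assume B: "B1 \<in> C" "B2 \<in> C" "B1 \<noteq> B2"
    show "relabel (phi B1) ` Qj \<inter> relabel (phi B2) ` Qj = {}"
    proof (rule equals0I)
      fix b assume b: "b \<in> relabel (phi B1) ` Qj \<inter> relabel (phi B2) ` Qj"
      obtain q1 where q1: "q1 \<in> Qj" "b = relabel (phi B1) q1" using IntD1[OF b] by blast
      obtain q2 where q2: "q2 \<in> Qj" "b = relabel (phi B2) q2" using IntD2[OF b] by blast
      have "B1 = B2" using lifted_eq[OF B(1,2) q1(1) q2(1)] q1(2) q2(2) by simp
      then show False using B(3) by simp
    qed
  qed
  also have "\<dots> = (\<Sum>B\<in>C. card Qj)"
  proof (rule sum.cong[OF refl])
    fix B assume "B \<in> C"
    have "inj_on (relabel (phi B)) Qj"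
    proof (rule inj_onI)
      fix q1 q2 assume "q1 \<in> Qj" "q2 \<in> Qj" "relabel (phi B) q1 = relabel (phi B) q2"
      then show "q1 = q2" using lifted_eq[OF \<open>B \<in> C\<close> \<open>B \<in> C\<close>] by blast
    qed
    then show "card (relabel (phi B) ` Qj) = card Qj" by (rule card_image)
  qed
  finally show ?thesis by simp
qed

lemma gmhp_lifted_class:
  assumes C: "C \<in> R" and Qj: "Qj \<in> Q"
  shows "gmhp t w Y g (lifted_class C Qj)"
proof -
  have "real (card (lifted_class C Qj)) = real (card C) * real (card Qj)"
    by (simp add: card_lifted_class[OF C Qj])
  also have "\<dots> = real g ^ (t - 1) * (real (card C) * real (w' choose t)) / real (w choose t)"
    using gmhp_Q[OF Qj] card_A by (simp add: gmhp_def)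
  also have "\<dots> = real g ^ (t - 1) * real (card Y choose t) / real (w choose t)"
    using steiner_system_card_blocks[OF finite_Y classes[OF C]] by (metis of_nat_mult)
  finally show ?thesis
    unfolding gmhp_def using hpacking_lifted_class[OF C Qj] hdist_lifted_class[OF C Qj] by blast
qed

lemma lgmhp_lifted_classes: "lgmhp t w Y g (case_prod lifted_class ` (R \<times> Q))"
  unfolding lgmhp_def using partition_lifted_classes gmhp_lifted_class by auto

end

lemma lgmhp_of_t_resolvable:
  assumes "finite Y" "t \<le> w" and res: "t_resolvable t w w' Y Bs"
    and Q: "lgmhp t w A g Q" "finite A" "card A = w'"
  shows "\<exists>P. lgmhp t w Y g P"
proof -
  obtain R where St: "steiner_system w w' Y Bs" and R: "partition_on Bs R"
    and classes: "\<forall>C\<in>R. steiner_system t w' Y C"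
    using res unfolding t_resolvable_def by blast
  have "\<exists>f. bij_betw f A B" if "B \<in> Bs" for B
    using steiner_system_blockD[OF St that] Q(2,3) \<open>finite Y\<close>
    by (metis finite_same_card_bij finite_subset)
  then obtain phi where "\<And>B. B \<in> Bs \<Longrightarrow> bij_betw (phi B) A B" by metis
  then interpret resolvable_lifting t w w' g Y Bs R A Q phi
    using assms St R classes by unfold_locales auto
  show ?thesis using lgmhp_lifted_classes by blast
qed

theorem theorem3p9:
  fixes t w w' n g :: nat
  assumes "0 < t" and "0 < w" and "0 < w'" and "0 < n" and "0 < g"
    and "t \<le> w" and "w \<le> w'"
    and "\<exists>(X :: nat set) B. finite X \<and> card X = n \<and> t_resolvable t w w' X B"
    and "\<exists>P. lgmhp t w {..<w'} g P"
  shows "\<exists>P. lgmhp t w {..<n} g P"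
proof -
  obtain X :: "nat set" and B where X: "finite X" "card X = n" and res: "t_resolvable t w w' X B"
    using assms(8) by blast
  obtain h where "bij_betw h X {..<n}" using finite_same_card_bij[OF X(1), of "{..<n}"] X(2) by auto
  then have res': "t_resolvable t w w' {..<n} ((`) h ` B)" by (rule t_resolvable_bij_image[OF res])
  obtain Q where Q: "lgmhp t w {..<w'} g Q" using assms(9) by blast
  show ?thesis
    by (rule lgmhp_of_t_resolvable[OF finite_lessThan assms(6) res' Q finite_lessThan card_lessThan])
qed

end
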